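(* Fix $l\in S^{d-1}$, $L'>R$ and $L=3L'$. Let $w:\mathbb R_+\to\mathbb R^d$ be a continuous path with $w(0)=0$ and $\limsup_{t\to\infty}\frac{l\cdot w(t)}{t}>0$. Then there exists an integer $h\ge1$ such that for all integers $\alpha\ge2$, $$\limsup_{M\to\infty}\frac1{M+1}\sum_{m=0}^M\mathbb 1_{\{h^{(m)}_\alpha(w)\le h\}}\ge\frac13 .$$
   Context: All quantities below are evaluated along the path $w$ (infimum of the empty set is $+\infty$). For $a<b$: open slab $\mathcal S_{(a,b)}=\{x:a<x\cdot l<b\}$, closed slab $\bar{\mathcal S}_{(a,b)}=\{x:a\le x\cdot l\le b\}$. For a set $A$: entrance time $H_A=\inf\{t\ge0:w(t)\in A\}$, exit time $T_A=\inf\{t\ge0:w(t)\notin A\}$; $T_u=\inf\{t\ge0:l\cdot w(t)\ge u\}$; $\theta_t$ denotes the time shift $(\theta_tw)(s)=w(t+s)$. For integer $m\ge0$: $R^{(m)}_1=H_{\bar{\mathcal S}_{(mL+L',mL+2L')}}$, $S^{(m)}_1=T_{\mathcal S_{(mL,(m+1)L)}}\circ\theta_{R^{(m)}_1}+R^{(m)}_1$, and for $k\ge2$, $R^{(m)}_k=R^{(m)}_1\circ\theta_{S^{(m)}_{k-1}}+S^{(m)}_{k-1}$, $S^{(m)}_k=S^{(m)}_1\circ\theta_{S^{(m)}_{k-1}}+S^{(m)}_{k-1}$. For integer $\alpha\ge2$: $k^{(m)}_\alpha=\max\{k\ge1:R^{(m)}_k+1\le S^{(m)}_k<T_{(m+\alpha)L}\}$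 if $T_{(m+\alpha)L}<\infty$ and this set is nonempty, and $k^{(m)}_\alpha=0$ otherwise; $h^{(m)}_\alpha=S^{(m)}_{k^{(m)}_\alpha}-T_{mL}$ if $T_{(m+\alpha)L}<\infty$ (with the convention $S^{(m)}_0=T_{mL}$), and $h^{(m)}_\alpha=\infty$ otherwise. Here $R>0$ is a fixed positive constant. *)

theory Defs
  imports "HOL-Analysis.Analysis"
begin

text \<open>Paths are functions real => 'a; only nonnegative times matter.
  Times are extended reals; the infimum of the empty set is +infinity.\<close>

definition hit_time :: "(real \<Rightarrow> 'a) \<Rightarrow> 'a set \<Rightarrow> ereal" where
  "hit_time w A = Inf (ereal ` {t. 0 \<le> t \<and> w t \<in> A})"

definition exit_time :: "(real \<Rightarrow> 'a) \<Rightarrow> 'a set \<Rightarrow> ereal" where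
  "exit_time w A = Inf (ereal ` {t. 0 \<le> t \<and> w t \<notin> A})"

definition level_time :: "'a::real_inner \<Rightarrow> (real \<Rightarrow> 'a) \<Rightarrow> real \<Rightarrow> ereal" where
  "level_time l w u = Inf (ereal ` {t. 0 \<le> t \<and> l \<bullet> w t \<ge> u})"

definition shift :: "real \<Rightarrow> (real \<Rightarrow> 'a) \<Rightarrow> (real \<Rightarrow> 'a)" where
  "shift t w = (\<lambda>s. w (t + s))"

definition after :: "ereal \<Rightarrow> ((real \<Rightarrow> 'a) \<Rightarrow> ereal) \<Rightarrow> (real \<Rightarrow> 'a) \<Rightarrow> ereal" where
  "after tau F w = (case tau of ereal t \<Rightarrow> F (shift t w) + ereal t | _ \<Rightarrow> \<infinity>)"

definition open_slab :: "'a::real_inner \<Rightarrow> real \<Rightarrow> real \<Rightarrow> 'a set" where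
  "open_slab l a b = {x. a < x \<bullet> l \<and> x \<bullet> l < b}"

definition closed_slab :: "'a::real_inner \<Rightarrow> real \<Rightarrow> real \<Rightarrow> 'a set" where
  "closed_slab l a b = {x. a \<le> x \<bullet> l \<and> x \<bullet> l \<le> b}"

definition R1 :: "'a::real_inner \<Rightarrow> real \<Rightarrow> real \<Rightarrow> nat \<Rightarrow> (real \<Rightarrow> 'a) \<Rightarrow> ereal" where
  "R1 l L L' m w = hit_time w (closed_slab l (real m * L + L') (real m * L + 2 * L'))"

definition S1 :: "'a::real_inner \<Rightarrow> real \<Rightarrow> real \<Rightarrow> nat \<Rightarrow> (real \<Rightarrow> 'a) \<Rightarrow> ereal" where
  "S1 l L L' m w = after (R1 l L L' m w)
      (\<lambda>v. exit_time v (open_slab l (real m * L) (real (m + 1) * L))) w"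

text \<open>Sseq n = S^{(m)}_{n+1}, Rseq n = R^{(m)}_{n+1}.\<close>
primrec Sseq :: "'a::real_inner \<Rightarrow> real \<Rightarrow> real \<Rightarrow> nat \<Rightarrow> (real \<Rightarrow> 'a) \<Rightarrow> nat \<Rightarrow> ereal" where
  "Sseq l L L' m w 0 = S1 l L L' m w"
| "Sseq l L L' m w (Suc n) = after (Sseq l L L' m w n) (S1 l L L' m) w"

primrec Rseq :: "'a::real_inner \<Rightarrow> real \<Rightarrow> real \<Rightarrow> nat \<Rightarrow> (real \<Rightarrow> 'a) \<Rightarrow> nat \<Rightarrow> ereal" where
  "Rseq l L L' m w 0 = R1 l L L' m w"
| "Rseq l L L' m w (Suc n) = after (Sseq l L L' m w n) (R1 l L L' m) w"

definition Rk :: "'a::real_inner \<Rightarrow> real \<Rightarrow> real \<Rightarrow> nat \<Rightarrow> (real \<Rightarrow> 'a) \<Rightarrow> nat \<Rightarrow> ereal" where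
  "Rk l L L' m w k = Rseq l L L' m w (k - 1)"

definition Sk :: "'a::real_inner \<Rightarrow> real \<Rightarrow> real \<Rightarrow> nat \<Rightarrow> (real \<Rightarrow> 'a) \<Rightarrow> nat \<Rightarrow> ereal" where
  "Sk l L L' m w k = Sseq l L L' m w (k - 1)"

definition k_alpha :: "'a::real_inner \<Rightarrow> real \<Rightarrow> real \<Rightarrow> nat \<Rightarrow> nat \<Rightarrow> (real \<Rightarrow> 'a) \<Rightarrow> nat" where
  "k_alpha l L L' m \<alpha> w =
     (let T = level_time l w (real (m + \<alpha>) * L);
          K = {k. 1 \<le> k \<and> Rk l L L' m w k + 1 \<le> Sk l L L' m w k \<and> Sk l L L' m w k < T}
      in if T < \<infinity> \<and> K \<noteq> {} then Max K else 0)"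

definition h_alpha :: "'a::real_inner \<Rightarrow> real \<Rightarrow> real \<Rightarrow> nat \<Rightarrow> nat \<Rightarrow> (real \<Rightarrow> 'a) \<Rightarrow> ereal" where
  "h_alpha l L L' m \<alpha> w =
     (if level_time l w (real (m + \<alpha>) * L) < \<infinity> then
        (let k = k_alpha l L L' m \<alpha> w;
             Sk' = (if k = 0 then level_time l w (real m * L) else Sk l L L' m w k)
         in Sk' - level_time l w (real m * L))
      else \<infinity>)"

end

theory Submission
  imports Defs
begin

(* Suppose the claim fails. Then every h >= 1 has a scale alpha(h) >= 2 at which, for all large M,
   more than 2/3 of the slabs m <= M satisfy h_alpha > h. Iterating h_(i+1) >= K alpha(h_i) produces
   K scales, where K is about 6 L / c and l . w(t) > c t for arbitrarily large t.

   For such a slab m the excursion S_k selected by k_alpha lasts at least one time unit, stays in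
   slab m, ends more than h after T_(mL) and before T_((m+alpha)L). These long excursions occupy
   disjoint unit time intervals, so at most t + 1 of them end by time t. One excursion serves two
   scales i < i' at the same slab only if T_((m+alpha_i)L) - T_(mL) > h_(i+1); since these increments
   sum to at most alpha_i t over m, this happens for at most t / K slabs per scale. Hence there are at
   most 2 t + 1 bad pairs (scale, slab), whereas the density bound gives about (2/3) K M of them with
   M about c t / L: a contradiction. *)

lemma card_le_card_image_add_card:
  fixes f :: "'a::linorder \<Rightarrow> 'b"
  assumes "finite I" "finite D"
    and collision: "\<And>i i'. i \<in> I \<Longrightarrow> i' \<in> I \<Longrightarrow> i < i' \<Longrightarrow> f i = f i' \<Longrightarrow> i \<in> D"
  shows "card I \<le> card (f ` I) + card D"
proof -
  define N where "N = {i \<in> I. \<forall>i' \<in> I. i < i' \<longrightarrow> f i' \<noteq> f i}"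
  have "inj_on f N"
  proof (rule inj_onI)
    fix i j
    assume "i \<in> N" "j \<in> N" "f i = f j"
    then show "i = j"
      unfolding N_def by (cases i j rule: linorder_cases) auto
  qed
  have "card I \<le> card (N \<union> D)"
    using assms collision unfolding N_def by (intro card_mono) auto
  also have "\<dots> \<le> card N + card D"
    by (rule card_Un_le)
  also have "card N = card (f ` N)"
    using card_image[OF \<open>inj_on f N\<close>] by simp
  also have "card (f ` N) \<le> card (f ` I)"
    using assms(1) unfolding N_def by (intro card_mono) auto
  finally show ?thesis
    by simp
qed

lemma card_le_card_image_add_card_gaps:
  fixes \<kappa> :: "nat \<Rightarrow> 'b" and x :: "'b \<Rightarrow> real" and hs :: "nat \<Rightarrow> nat" and b :: "nat \<Rightarrow> real"
  assumes "finite J" "I \<subseteq> J" "mono hs"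
    and between: "\<And>i. i \<in> I \<Longrightarrow> real (hs i) + a < x (\<kappa> i) \<and> x (\<kappa> i) < b i"
  shows "card I \<le> card (\<kappa> ` I) + card {i \<in> J. real (hs (Suc i)) < b i - a}"
proof (rule card_le_card_image_add_card)
  fix i i'
  assume i: "i \<in> I" "i' \<in> I" "i < i'" "\<kappa> i = \<kappa> i'"
  have "real (hs (Suc i)) \<le> real (hs i')"
    using \<open>mono hs\<close> i(3) by (simp add: monoD)
  then show "i \<in> {i \<in> J. real (hs (Suc i)) < b i - a}"
    using between[OF i(1)] between[OF i(2)] i(1,4) \<open>I \<subseteq> J\<close> by auto
qed (use assms in \<open>auto intro: finite_subset\<close>)

lemma sum_card_filter_swap:
  assumes "finite A" "finite B"
  shows "(\<Sum>a\<in>A. card {b \<in> B. P a b}) = (\<Sum>b\<in>B. card {a \<in> A. P a b})"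
proof -
  have "card {b \<in> B. P a b} = (\<Sum>b\<in>B. if P a b then 1 else 0)" for a
    using assms(2) by (simp add: sum.If_cases Int_def)
  moreover have "card {a \<in> A. P a b} = (\<Sum>a\<in>A. if P a b then 1 else 0)" for b
    using assms(1) by (simp add: sum.If_cases Int_def)
  ultimately show ?thesis
    by (simp only:) (rule sum.swap)
qed

lemma card_gt_of_mean_indicator_lt:
  fixes P :: "nat \<Rightarrow> bool"
  assumes "1 / real (M + 1) * (\<Sum>m = 0..M. if P m then 1 else 0) < 1 / 3"
  shows "2 * real (M + 1) / 3 < real (card {m \<in> {..M}. \<not> P m})"
proof -
  have "real (card {m \<in> {..M}. \<not> P m}) = (\<Sum>m\<le>M. if P m then 0 else 1)"
    by (simp add: sum.If_cases Int_def)
  moreover have "(\<Sum>m\<le>M. (if P m then 1 else 0) + (if P m then 0 else 1)) = (\<Sum>m\<le>M. 1::real)"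
    by (rule sum.cong) auto
  ultimately have "(\<Sum>m = 0..M. if P m then 1 else 0) + real (card {m \<in> {..M}. \<not> P m}) = real (M + 1)"
    by (simp add: atLeast0AtMost sum.distrib)
  with assms show ?thesis
    by (simp add: field_simps)
qed

lemma sum_shifted_increments_le:
  fixes g :: "nat \<Rightarrow> real"
  assumes "mono g" "\<And>j. 0 \<le> g j" "\<And>j. g j \<le> t"
  shows "(\<Sum>m<n. g (m + a) - g m) \<le> real a * t"
  using assms
proof (induction a arbitrary: g)
  case 0
  then show ?case by simp
next
  case (Suc a)
  have "(\<Sum>m<n. g (Suc m + a) - g (Suc m)) \<le> real a * t"
    using Suc.IH[of "\<lambda>j. g (Suc j)"] Suc.prems by (simp add: mono_def)
  moreover have "(\<Sum>m<n. g (Suc m) - g m) \<le> t"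
    using Suc.prems(2,3)[of 0] Suc.prems(3)[of n] by (simp add: sum_lessThan_telescope)
  moreover have "(\<Sum>m<n. g (m + Suc a) - g m) =
      (\<Sum>m<n. g (Suc m + a) - g (Suc m)) + (\<Sum>m<n. g (Suc m) - g m)"
    by (simp add: sum.distrib[symmetric])
  ultimately show ?case
    by (simp add: algebra_simps)
qed

lemma card_large_increments_le:
  fixes g :: "nat \<Rightarrow> real"
  assumes "mono g" "\<And>j. 0 \<le> g j" "\<And>j. g j \<le> t" "0 < H"
  shows "real (card {m \<in> {..M}. H < g (m + a) - g m}) * H \<le> real a * t"
proof -
  let ?S = "{m \<in> {..M}. H < g (m + a) - g m}"
  have "real (card ?S) * H = (\<Sum>m\<in>?S. H)"
    by simp
  also have "\<dots> \<le> (\<Sum>m\<in>?S. g (m + a) - g m)"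
    by (rule sum_mono) simp
  also have "\<dots> \<le> (\<Sum>m<Suc M. g (m + a) - g m)"
    using assms(1) by (intro sum_mono2) (auto simp: monoD)
  also have "\<dots> \<le> real a * t"
    using assms(1-3) by (rule sum_shifted_increments_le)
  finally show ?thesis .
qed

lemma sum_card_large_increments_le:
  fixes g :: "nat \<Rightarrow> real" and \<alpha> :: "nat \<Rightarrow> nat"
  assumes g: "mono g" "\<And>j. 0 \<le> g j" "\<And>j. g j \<le> t"
    and \<alpha>: "\<And>i. i < K \<Longrightarrow> 1 \<le> \<alpha> i" "\<And>i. i < K \<Longrightarrow> real (\<alpha> i * K) \<le> H i"
  shows "(\<Sum>i<K. real (card {m \<in> {..M}. H i < g (m + \<alpha> i) - g m})) \<le> t"
proof -
  have "real (card {m \<in> {..M}. H i < g (m + \<alpha> i) - g m}) \<le> t / real K" if "i < K" for i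
  proof -
    let ?c = "real (card {m \<in> {..M}. H i < g (m + \<alpha> i) - g m})"
    have "0 < real (\<alpha> i * K)"
      using \<alpha>(1)[OF that] that by simp
    then have "0 < H i"
      using \<alpha>(2)[OF that] by linarith
    have "real (\<alpha> i) * (?c * real K) = ?c * real (\<alpha> i * K)"
      by simp
    also have "\<dots> \<le> ?c * H i"
      using \<alpha>(2)[OF that] by (rule mult_left_mono) simp
    also have "\<dots> \<le> real (\<alpha> i) * t"
      using card_large_increments_le[OF g \<open>0 < H i\<close>] .
    finally have "?c * real K \<le> t"
      using \<alpha>(1)[OF that] by simp
    then show ?thesis
      using that by (simp add: field_simps)
  qed
  then have "(\<Sum>i<K. real (card {m \<in> {..M}. H i < g (m + \<alpha> i) - g m})) \<le> (\<Sum>i<K. t / real K)"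
    by (intro sum_mono) simp
  also have "\<dots> \<le> t"
    using g(2,3)[of 0] by simp
  finally show ?thesis .
qed

lemma frequently_above_linear_of_Limsup_pos:
  fixes f :: "real \<Rightarrow> real"
  assumes "0 < Limsup at_top (\<lambda>t. ereal (f t / t))"
  obtains c where "0 < c" "\<exists>\<^sub>F t in at_top. c * t < f t"
proof -
  have "\<not> Limsup at_top (\<lambda>t. ereal (f t / t)) \<le> 0"
    using assms by simp
  then obtain y where "0 < y" and not_ev: "\<not> eventually (\<lambda>t. ereal (f t / t) < y) at_top"
    unfolding Limsup_le_iff by blast
  obtain c where c: "0 < ereal c" "ereal c < y"
    using ereal_dense2[OF \<open>0 < y\<close>] by blast
  have "\<exists>\<^sub>F t in at_top. y \<le> ereal (f t / t)"
    using not_ev unfolding frequently_def not_le .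
  moreover have "\<forall>\<^sub>F t in at_top. y \<le> ereal (f t / t) \<longrightarrow> c * t < f t"
    using eventually_gt_at_top[of 0]
  proof eventually_elim
    case (elim t)
    show ?case
    proof
      assume "y \<le> ereal (f t / t)"
      with c(2) have "ereal c < ereal (f t / t)"
        by (rule order_less_le_trans)
      then show "c * t < f t"
        using elim by (simp add: pos_less_divide_eq)
    qed
  qed
  ultimately have "\<exists>\<^sub>F t in at_top. c * t < f t"
    by (rule frequently_mp[rotated])
  then show ?thesis
    using that c(1) by simp
qed

lemma level_reached_at_linear_time:
  fixes f :: "real \<Rightarrow> real"
  assumes L: "0 < L" and c: "0 < c" and above: "\<exists>\<^sub>F t in at_top. c * t < f t"
  obtains t M where "1 \<le> t" "M0 \<le> M" "A \<le> M" "real (M + A) * L \<le> f t" "c * t < 2 * real (M + 1) * L"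
proof -
  obtain t where t: "max 1 (L * real (M0 + 2 * A + 1) / c) \<le> t" "c * t < f t"
    using frequently_ex[OF frequently_eventually_frequently[OF above eventually_ge_at_top]] by blast
  define J where "J = nat \<lfloor>f t / L\<rfloor>"
  have "L * real (M0 + 2 * A + 1) \<le> c * t"
    using t(1) c by (simp add: field_simps)
  then have "real (M0 + 2 * A + 1) < f t / L"
    using t(2) L by (simp add: field_simps)
  then have J: "M0 + 2 * A + 1 \<le> J" "real J \<le> f t / L" "f t / L < real J + 1"
    unfolding J_def by linarith+
  then have level: "real J * L \<le> f t" "f t < (real J + 1) * L"
    using L by (simp_all add: field_simps)
  show ?thesis
  proof (rule that[of t "J - A"])
    show "real (J - A + A) * L \<le> f t"
      using J(1) level(1) by simp
    have "(real J + 1) * L \<le> 2 * real (J - A + 1) * L"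
      using J(1) L by (intro mult_right_mono) auto
    then show "c * t < 2 * real (J - A + 1) * L"
      using t(2) level(2) by linarith
  qed (use t(1) J(1) in auto)
qed

lemma hit_time_nonneg: "0 \<le> hit_time w A"
  unfolding hit_time_def by (rule Inf_greatest) auto

lemma exit_time_nonneg: "0 \<le> exit_time w A"
  unfolding exit_time_def by (rule Inf_greatest) auto

lemma level_time_nonneg: "0 \<le> level_time l w u"
  unfolding level_time_def by (rule Inf_greatest) auto

lemma level_time_le: "0 \<le> t \<Longrightarrow> u \<le> l \<bullet> w t \<Longrightarrow> level_time l w u \<le> ereal t"
  unfolding level_time_def by (rule Inf_lower) auto

lemma level_time_mono: "u \<le> v \<Longrightarrow> level_time l w u \<le> level_time l w v"
  unfolding level_time_def by (rule Inf_superset_mono) auto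

lemma level_time_real:
  assumes "0 \<le> t" "u \<le> l \<bullet> w t"
  shows "level_time l w u = ereal (real_of_ereal (level_time l w u))"
    and "0 \<le> real_of_ereal (level_time l w u)" "real_of_ereal (level_time l w u) \<le> t"
  using level_time_le[of t u l w] assms level_time_nonneg[of l w u]
  by (cases "level_time l w u"; simp)+

lemma after_ge: "(\<And>v. 0 \<le> F v) \<Longrightarrow> tau \<le> after tau F w"
  by (cases tau) (auto simp: after_def intro: add_increasing)

lemma shift_shift: "shift r (shift s w) = shift (r + s) w"
  unfolding shift_def by (simp add: algebra_simps)

lemma R1_nonneg: "0 \<le> R1 l L L' m w"
  unfolding R1_def by (rule hit_time_nonneg)

lemma Sseq_eq_after_Rseq:
  "Sseq l L L' m w n = after (Rseq l L L' m w n)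
     (\<lambda>v. exit_time v (open_slab l (real m * L) (real (m + 1) * L))) w"
proof (cases n)
  case 0
  then show ?thesis by (simp add: S1_def)
next
  case (Suc k)
  then show ?thesis
    by (cases "Sseq l L L' m w k"; cases "R1 l L L' m (shift (real_of_ereal (Sseq l L L' m w k)) w)")
      (simp_all add: after_def S1_def shift_shift add.assoc)
qed

lemma Rseq_le_Sseq: "Rseq l L L' m w n \<le> Sseq l L L' m w n"
  unfolding Sseq_eq_after_Rseq by (rule after_ge) (rule exit_time_nonneg)

lemma Sseq_le_Rseq_Suc: "Sseq l L L' m w n \<le> Rseq l L L' m w (Suc n)"
  by (simp add: after_ge R1_nonneg)

lemma Rseq_nonneg: "0 \<le> Rseq l L L' m w n"
proof (induction n)
  case (Suc n)
  then show ?case using Rseq_le_Sseq Sseq_le_Rseq_Suc by (meson order_trans)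
qed (simp add: R1_nonneg)

lemma Sseq_le_Rseq:
  assumes "n < n'"
  shows "Sseq l L L' m w n \<le> Rseq l L L' m w n'"
proof -
  have "mono (Rseq l L L' m w)"
    using Rseq_le_Sseq Sseq_le_Rseq_Suc by (meson incseq_SucI order_trans)
  then show ?thesis
    using Sseq_le_Rseq_Suc assms by (meson Suc_leI monoD order_trans)
qed

lemma in_open_slab_between_Rseq_Sseq:
  assumes "Rseq l L L' m w n \<le> ereal \<tau>" "ereal \<tau> < Sseq l L L' m w n"
  shows "w \<tau> \<in> open_slab l (real m * L) (real (m + 1) * L)"
proof (rule ccontr)
  assume out: "w \<tau> \<notin> open_slab l (real m * L) (real (m + 1) * L)"
  obtain r where r: "Rseq l L L' m w n = ereal r"
    using assms(1) Rseq_nonneg[of l L L' m w n] by (cases "Rseq l L L' m w n") auto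
  have "exit_time (shift r w) (open_slab l (real m * L) (real (m + 1) * L)) \<le> ereal (\<tau> - r)"
    unfolding exit_time_def using out assms(1) r by (intro Inf_lower) (auto simp: shift_def)
  then have "exit_time (shift r w) (open_slab l (real m * L) (real (m + 1) * L)) + ereal r
      \<le> ereal (\<tau> - r) + ereal r"
    by (rule add_right_mono)
  then have "Sseq l L L' m w n \<le> ereal \<tau>"
    using r by (simp add: Sseq_eq_after_Rseq after_def)
  then show False
    using assms(2) by simp
qed

lemma open_slabs_disjoint:
  assumes "0 < L" "m \<noteq> m'"
  shows "open_slab l (real m * L) (real (m + 1) * L) \<inter> open_slab l (real m' * L) (real (m' + 1) * L) = {}"
proof -
  have "\<not> (real m * L < x \<and> x < real (m + 1) * L \<and> real m' * L < x \<and> x < real (m' + 1) * L)" for x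
  proof
    assume "real m * L < x \<and> x < real (m + 1) * L \<and> real m' * L < x \<and> x < real (m' + 1) * L"
    then have "real m < real (m' + 1)" "real m' < real (m + 1)"
      using assms(1) mult_less_cancel_right_pos[of L] by (meson less_trans)+
    then show False
      using assms(2) by linarith
  qed
  then show ?thesis
    unfolding open_slab_def by auto
qed

lemma excursions_disjoint:
  assumes "0 < L"
    and "Rseq l L L' m w n \<le> ereal \<tau>" "ereal \<tau> < Sseq l L L' m w n"
    and "Rseq l L L' m' w n' \<le> ereal \<tau>" "ereal \<tau> < Sseq l L L' m' w n'"
  shows "(m, n) = (m', n')"
proof -
  have "m = m'"
    using in_open_slab_between_Rseq_Sseq[OF assms(2,3)] in_open_slab_between_Rseq_Sseq[OF assms(4,5)]
      open_slabs_disjoint[OF assms(1)] by blast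
  moreover have False if "n < n'" "Rseq l L L' m w n' \<le> ereal \<tau>" "ereal \<tau> < Sseq l L L' m w n" for n n'
    using Sseq_le_Rseq[OF that(1)] that(2,3) by (meson leD order_trans)
  ultimately show ?thesis
    using assms(2-5) by (metis linorder_neqE_nat)
qed

definition long_excursions :: "'a::real_inner \<Rightarrow> real \<Rightarrow> real \<Rightarrow> (real \<Rightarrow> 'a) \<Rightarrow> real \<Rightarrow> (nat \<times> nat) set"
  where "long_excursions l L L' w t =
    {(m, n). Rseq l L L' m w n + 1 \<le> Sseq l L L' m w n \<and> Sseq l L L' m w n \<le> ereal t}"

lemma long_excursion_start:
  assumes "(m, n) \<in> long_excursions l L L' w t"
  obtains r where "Rseq l L L' m w n = ereal r" "0 \<le> r" "r + 1 \<le> t"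
    "ereal r + 1 \<le> Sseq l L L' m w n"
proof -
  have "Rseq l L L' m w n + 1 \<le> ereal t" "Rseq l L L' m w n + 1 \<le> Sseq l L L' m w n"
    using assms unfolding long_excursions_def by auto
  with Rseq_nonneg[of l L L' m w n] that show ?thesis
    by (cases "Rseq l L L' m w n") auto
qed

lemma long_excursions_eq_if_starts_close:
  assumes L: "0 < L"
    and mem: "(m, n) \<in> long_excursions l L L' w t" "(m', n') \<in> long_excursions l L L' w t"
    and close: "Rseq l L L' m w n \<le> Rseq l L L' m' w n'" "Rseq l L L' m' w n' < Rseq l L L' m w n + 1"
  shows "(m, n) = (m', n')"
proof -
  obtain r where r: "Rseq l L L' m w n = ereal r" "ereal r + 1 \<le> Sseq l L L' m w n"
    using long_excursion_start[OF mem(1)] by metis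
  obtain r' where r': "Rseq l L L' m' w n' = ereal r'" "ereal r' + 1 \<le> Sseq l L L' m' w n'"
    using long_excursion_start[OF mem(2)] by metis
  show ?thesis
  proof (rule excursions_disjoint[OF L, where \<tau> = r'])
    show "ereal r' < Sseq l L L' m w n"
      using close(2) r r' by (simp add: order_less_le_trans[OF _ r(2)])
    show "ereal r' < Sseq l L L' m' w n'"
      using r'(2) by (rule order_less_le_trans[rotated]) simp
  qed (use close(1) r r' in auto)
qed

lemma inj_on_long_excursions_start:
  assumes L: "0 < L"
  shows "inj_on (\<lambda>(m, n). nat \<lfloor>real_of_ereal (Rseq l L L' m w n)\<rfloor>) (long_excursions l L L' w t)"
proof (rule inj_onI, clarify)
  fix m n m' n'
  assume mem: "(m, n) \<in> long_excursions l L L' w t" "(m', n') \<in> long_excursions l L L' w t"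
    and floor: "nat \<lfloor>real_of_ereal (Rseq l L L' m w n)\<rfloor> = nat \<lfloor>real_of_ereal (Rseq l L L' m' w n')\<rfloor>"
  obtain r where r: "Rseq l L L' m w n = ereal r" "0 \<le> r"
    using long_excursion_start[OF mem(1)] by metis
  obtain r' where r': "Rseq l L L' m' w n' = ereal r'" "0 \<le> r'"
    using long_excursion_start[OF mem(2)] by metis
  have "\<lfloor>r\<rfloor> = \<lfloor>r'\<rfloor>"
    using floor r r' by (simp add: nat_eq_iff)
  then have "r \<le> r' \<and> r' < r + 1 \<or> r' \<le> r \<and> r < r' + 1"
    by linarith
  then show "m = m' \<and> n = n'"
    using long_excursions_eq_if_starts_close[OF L mem] long_excursions_eq_if_starts_close[OF L mem(2,1)] r r'
    by auto
qed

lemma long_excursions_start_le: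
  "(\<lambda>(m, n). nat \<lfloor>real_of_ereal (Rseq l L L' m w n)\<rfloor>) ` long_excursions l L L' w t \<subseteq> {..nat \<lfloor>t\<rfloor>}"
proof clarify
  fix m n
  assume "(m, n) \<in> long_excursions l L L' w t"
  then obtain r where "Rseq l L L' m w n = ereal r" "r + 1 \<le> t"
    using long_excursion_start by metis
  then show "nat \<lfloor>real_of_ereal (Rseq l L L' m w n)\<rfloor> \<le> nat \<lfloor>t\<rfloor>"
    by (simp add: floor_mono nat_mono)
qed

lemma finite_long_excursions: "0 < L \<Longrightarrow> finite (long_excursions l L L' w t)"
  using inj_on_finite[OF inj_on_long_excursions_start long_excursions_start_le] by simp

lemma card_long_excursions_le: "0 < L \<Longrightarrow> card (long_excursions l L L' w t) \<le> nat \<lfloor>t\<rfloor> + 1"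
  using card_inj_on_le[OF inj_on_long_excursions_start long_excursions_start_le] by simp

lemma last_long_excursion_of_h_alpha_gt:
  assumes L: "0 < L" and h: "0 \<le> h"
    and T: "level_time l w (real (m + \<alpha>) * L) = ereal T"
    and Tm: "level_time l w (real m * L) = ereal Tm"
    and gt: "ereal h < h_alpha l L L' m \<alpha> w"
  obtains s where "Sseq l L L' m w (k_alpha l L L' m \<alpha> w - 1) = ereal s" "s < T" "h < s - Tm"
    "Rseq l L L' m w (k_alpha l L L' m \<alpha> w - 1) + 1 \<le> ereal s"
proof -
  define k where "k = k_alpha l L L' m \<alpha> w"
  define K where "K = {k. 1 \<le> k \<and> Rk l L L' m w k + 1 \<le> Sk l L L' m w k \<and> Sk l L L' m w k < ereal T}"
  have k: "k = (if K \<noteq> {} then Max K else 0)"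
    unfolding k_def k_alpha_def K_def Let_def T by simp
  have h_alpha: "h_alpha l L L' m \<alpha> w = (if k = 0 then ereal Tm else Sk l L L' m w k) - ereal Tm"
    unfolding h_alpha_def k_def using T Tm by simp
  have "k \<noteq> 0"
    using gt h unfolding h_alpha by (cases "k = 0") auto
  then have "K \<noteq> {}"
    using k by auto
  have "K \<subseteq> Suc ` snd ` long_excursions l L L' w T"
  proof
    fix j
    assume "j \<in> K"
    then have "(m, j - 1) \<in> long_excursions l L L' w T" "j = Suc (j - 1)"
      unfolding K_def Rk_def Sk_def long_excursions_def by auto
    then show "j \<in> Suc ` snd ` long_excursions l L L' w T"
      by force
  qed
  then have "finite K"
    using finite_long_excursions[OF L] by (meson finite_imageI finite_subset)
  then have "k \<in> K"
    using k Max_in \<open>K \<noteq> {}\<close> by simp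
  then have long: "Rseq l L L' m w (k - 1) + 1 \<le> Sseq l L L' m w (k - 1)"
    and before: "Sseq l L L' m w (k - 1) < ereal T"
    unfolding K_def Rk_def Sk_def by auto
  have "0 \<le> Sseq l L L' m w (k - 1)"
    using Rseq_nonneg Rseq_le_Sseq order_trans by blast
  then obtain s where s: "Sseq l L L' m w (k - 1) = ereal s"
    using before by (cases "Sseq l L L' m w (k - 1)") auto
  have "ereal h < ereal s - ereal Tm"
    using gt h_alpha \<open>k \<noteq> 0\<close> s unfolding Sk_def by simp
  then show ?thesis
    using that[of s] s long before unfolding k_def by simp
qed

definition capped_level_time :: "'a::real_inner \<Rightarrow> real \<Rightarrow> (real \<Rightarrow> 'a) \<Rightarrow> nat \<Rightarrow> nat \<Rightarrow> real"
  where "capped_level_time l L w J j = real_of_ereal (level_time l w (real (min j J) * L))"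

lemma
  assumes L: "0 < L" and t: "0 \<le> t" and level: "real J * L \<le> l \<bullet> w t"
  shows level_time_eq_capped_level_time:
      "j \<le> J \<Longrightarrow> level_time l w (real j * L) = ereal (capped_level_time l L w J j)"
    and capped_level_time_bounds: "0 \<le> capped_level_time l L w J j" "capped_level_time l L w J j \<le> t"
    and mono_capped_level_time: "mono (capped_level_time l L w J)"
proof -
  have real: "level_time l w (real (min j J) * L) = ereal (capped_level_time l L w J j)"
    "0 \<le> capped_level_time l L w J j" "capped_level_time l L w J j \<le> t" for j
  proof -
    have "real (min j J) * L \<le> real J * L"
      using L by (intro mult_right_mono) auto
    then have "real (min j J) * L \<le> l \<bullet> w t"
      using level by linarith
    then show "level_time l w (real (min j J) * L) = ereal (capped_level_time l L w J j)"
      "0 \<le> capped_level_time l L w J j" "capped_level_time l L w J j \<le> t"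
      using level_time_real[of t "real (min j J) * L" l w] t unfolding capped_level_time_def by blast+
  qed
  then show "j \<le> J \<Longrightarrow> level_time l w (real j * L) = ereal (capped_level_time l L w J j)"
    by (metis min.absorb1)
  show "0 \<le> capped_level_time l L w J j" "capped_level_time l L w J j \<le> t"
    using real by blast+
  show "mono (capped_level_time l L w J)"
  proof (rule monoI)
    fix i j :: nat
    assume "i \<le> j"
    then have "level_time l w (real (min i J) * L) \<le> level_time l w (real (min j J) * L)"
      using L by (intro level_time_mono) simp
    then show "capped_level_time l L w J i \<le> capped_level_time l L w J j"
      using real(1)[of i] real(1)[of j] by simp
  qed
qed

lemma sum_card_long_excursion_choices_le:
  fixes \<kappa> :: "nat \<Rightarrow> nat \<Rightarrow> nat" and I :: "nat \<Rightarrow> nat set"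
  assumes L: "0 < L" and fin: "\<And>m. finite (I m)"
    and long: "\<And>m i. m \<le> M \<Longrightarrow> i \<in> I m \<Longrightarrow> (m, \<kappa> m i) \<in> long_excursions l L L' w t"
  shows "(\<Sum>m\<le>M. card (\<kappa> m ` I m)) \<le> nat \<lfloor>t\<rfloor> + 1"
proof -
  have "(\<Sum>m\<le>M. card (\<kappa> m ` I m)) = card (SIGMA m:{..M}. \<kappa> m ` I m)"
    using fin by simp
  also have "\<dots> \<le> card (long_excursions l L L' w t)"
    using long by (intro card_mono finite_long_excursions[OF L]) auto
  also have "\<dots> \<le> nat \<lfloor>t\<rfloor> + 1"
    by (rule card_long_excursions_le[OF L])
  finally show ?thesis .
qed

lemma sum_card_h_alpha_gt_le:
  fixes l :: "'a::real_inner" and w :: "real \<Rightarrow> 'a" and hs \<alpha> :: "nat \<Rightarrow> nat"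
  assumes L: "0 < L" and t: "0 \<le> t" and level: "real (M + A) * L \<le> l \<bullet> w t"
    and \<alpha>: "\<And>i. i < K \<Longrightarrow> 1 \<le> \<alpha> i" "\<And>i. i < K \<Longrightarrow> \<alpha> i \<le> A"
    and hs: "mono hs" "\<And>i. i < K \<Longrightarrow> \<alpha> i * K \<le> hs (Suc i)"
  shows "(\<Sum>i<K. real (card {m \<in> {..M}. ereal (real (hs i)) < h_alpha l L L' m (\<alpha> i) w})) \<le> 2 * t + 1"
proof -
  define g where "g = capped_level_time l L w (M + A)"
  note g = mono_capped_level_time[where l = l and w = w, OF L t level, folded g_def]
    capped_level_time_bounds[where l = l and w = w, OF L t level, folded g_def]
    level_time_eq_capped_level_time[where l = l and w = w, OF L t level, folded g_def]
  define I where "I m = {i \<in> {..<K}. ereal (real (hs i)) < h_alpha l L L' m (\<alpha> i) w}" for m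
  define \<kappa> where "\<kappa> m i = k_alpha l L L' m (\<alpha> i) w - 1" for m i
  define x where "x m n = real_of_ereal (Sseq l L L' m w n)" for m n
  have witness: "real (hs i) + g m < x m (\<kappa> m i) \<and> x m (\<kappa> m i) < g (m + \<alpha> i)
      \<and> (m, \<kappa> m i) \<in> long_excursions l L L' w t"
    if "m \<le> M" "i \<in> I m" for m i
  proof -
    have "m + \<alpha> i \<le> M + A"
      using that \<alpha>(2) unfolding I_def by fastforce
    then have "\<exists>s. Sseq l L L' m w (\<kappa> m i) = ereal s \<and> s < g (m + \<alpha> i) \<and> real (hs i) < s - g m
        \<and> Rseq l L L' m w (\<kappa> m i) + 1 \<le> ereal s"
      using last_long_excursion_of_h_alpha_gt[OF L _ g(4) g(4), of "real (hs i)" m "\<alpha> i" L'] that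
      unfolding \<kappa>_def I_def by auto
    with g(3)[of "m + \<alpha> i"] show ?thesis
      unfolding x_def long_excursions_def by force
  qed
  define D where "D m = {i \<in> {..<K}. real (hs (Suc i)) < g (m + \<alpha> i) - g m}" for m
  have "card (I m) \<le> card (\<kappa> m ` I m) + card (D m)" if "m \<le> M" for m
    unfolding D_def using witness[OF that] hs(1) by (intro card_le_card_image_add_card_gaps[where x = "x m"]) (auto simp: I_def)
  then have "(\<Sum>m\<le>M. card (I m)) \<le> (\<Sum>m\<le>M. card (\<kappa> m ` I m)) + (\<Sum>m\<le>M. card (D m))"
    unfolding sum.distrib[symmetric] by (intro sum_mono) simp
  moreover have "(\<Sum>m\<le>M. card (\<kappa> m ` I m)) \<le> nat \<lfloor>t\<rfloor> + 1"
    using witness by (intro sum_card_long_excursion_choices_le[OF L]) (auto simp: I_def)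
  moreover have "(\<Sum>m\<le>M. card (D m)) = (\<Sum>i<K. card {m \<in> {..M}. real (hs (Suc i)) < g (m + \<alpha> i) - g m})"
    unfolding D_def by (rule sum_card_filter_swap) simp_all
  moreover have "(\<Sum>i<K. real (card {m \<in> {..M}. real (hs (Suc i)) < g (m + \<alpha> i) - g m})) \<le> t"
    using sum_card_large_increments_le[OF g(1-3) \<alpha>(1), where H = "\<lambda>i. real (hs (Suc i))"] hs(2)
    by (simp del: of_nat_mult)
  moreover have "(\<Sum>i<K. card {m \<in> {..M}. ereal (real (hs i)) < h_alpha l L L' m (\<alpha> i) w}) = (\<Sum>m\<le>M. card (I m))"
    unfolding I_def by (rule sum_card_filter_swap) simp_all
  moreover have "real (nat \<lfloor>t\<rfloor>) \<le> t"
    using t by linarith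
  ultimately show ?thesis
    by (simp flip: of_nat_sum) linarith
qed

definition h_alpha_freq :: "'a::real_inner \<Rightarrow> real \<Rightarrow> real \<Rightarrow> (real \<Rightarrow> 'a) \<Rightarrow> nat \<Rightarrow> nat \<Rightarrow> nat \<Rightarrow> real"
  where "h_alpha_freq l L L' w \<alpha> h M =
    1 / real (M + 1) * (\<Sum>m = 0..M. if h_alpha l L L' m \<alpha> w \<le> ereal (real h) then 1 else 0)"

lemma frequent_h_alpha_le_at_some_scale:
  fixes l :: "'a::real_inner" and w :: "real \<Rightarrow> 'a" and hs \<alpha> :: "nat \<Rightarrow> nat"
  assumes L: "0 < L" and c: "0 < c" and above: "\<exists>\<^sub>F t in at_top. c * t < l \<bullet> w t"
    and hs: "mono hs" and \<alpha>: "\<And>i. 1 \<le> \<alpha> i" "\<And>i. \<alpha> i * K \<le> hs (Suc i)"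
    and K: "6 * L / c + 2 \<le> real K"
  shows "\<exists>i<K. 1 / 3 \<le> Limsup sequentially (\<lambda>M. ereal (h_alpha_freq l L L' w (\<alpha> i) (hs i) M))"
proof (rule ccontr)
  assume "\<not> ?thesis"
  then have "\<forall>i\<in>{..<K}. \<forall>\<^sub>F M in sequentially. ereal (h_alpha_freq l L L' w (\<alpha> i) (hs i) M) < 1 / 3"
    by (auto simp: not_le intro: Limsup_lessD)
  then have "\<forall>\<^sub>F M in sequentially. \<forall>i\<in>{..<K}. ereal (h_alpha_freq l L L' w (\<alpha> i) (hs i) M) < 1 / 3"
    by (rule eventually_ball_finite[rotated]) simp
  then obtain M0 where "\<forall>M\<ge>M0. \<forall>i\<in>{..<K}. ereal (h_alpha_freq l L L' w (\<alpha> i) (hs i) M) < 1 / 3"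
    unfolding eventually_sequentially by blast
  then have M0: "h_alpha_freq l L L' w (\<alpha> i) (hs i) M < 1 / 3" if "M0 \<le> M" "i < K" for M i
    using that by (simp add: divide_ereal_def one_ereal_def)
  define A where "A = (\<Sum>i<K. \<alpha> i)"
  obtain t M where t: "1 \<le> t" "M0 \<le> M" "A \<le> M" "real (M + A) * L \<le> l \<bullet> w t"
    and t_small: "c * t < 2 * real (M + 1) * L"
    using level_reached_at_linear_time[OF L c above] .
  have "(\<Sum>i<K. real (card {m \<in> {..M}. ereal (real (hs i)) < h_alpha l L L' m (\<alpha> i) w})) \<le> 2 * t + 1"
    using L t(1,4) \<alpha> hs by (intro sum_card_h_alpha_gt_le) (auto simp: A_def intro: member_le_sum)
  moreover have "real K * (2 * real (M + 1) / 3)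
      \<le> (\<Sum>i<K. real (card {m \<in> {..M}. ereal (real (hs i)) < h_alpha l L L' m (\<alpha> i) w}))"
  proof -
    have "2 * real (M + 1) / 3 < real (card {m \<in> {..M}. ereal (real (hs i)) < h_alpha l L L' m (\<alpha> i) w})"
      if "i < K" for i
      using card_gt_of_mean_indicator_lt[of M "\<lambda>m. h_alpha l L L' m (\<alpha> i) w \<le> ereal (real (hs i))"]
        M0[OF t(2) that] unfolding h_alpha_freq_def by (simp add: not_le)
    then show ?thesis
      using sum_mono[of "{..<K}" "\<lambda>_. 2 * real (M + 1) / 3"] by (simp add: less_imp_le)
  qed
  moreover have "2 * t + 1 < real K * (2 * real (M + 1) / 3)"
  proof -
    define n where "n = real (M + 1)"
    have "1 \<le> n"
      unfolding n_def by simp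
    have "2 * t < 4 * n * L / c"
      using t_small c unfolding n_def by (simp add: field_simps)
    then have "2 * t + 1 < 4 * n * L / c + 4 * n / 3"
      using \<open>1 \<le> n\<close> by linarith
    also have "\<dots> = (6 * L / c + 2) * (2 * n / 3)"
      by (simp add: field_simps)
    also have "\<dots> \<le> real K * (2 * n / 3)"
      using K \<open>1 \<le> n\<close> by (intro mult_right_mono) simp_all
    finally show ?thesis
      unfolding n_def .
  qed
  ultimately show False
    by linarith
qed

lemma frequent_h_alpha_le_for_some_h:
  fixes l :: "'a::real_inner" and w :: "real \<Rightarrow> 'a" and scale :: "nat \<Rightarrow> nat"
  assumes L: "0 < L" and c: "0 < c" and above: "\<exists>\<^sub>F t in at_top. c * t < l \<bullet> w t"
    and scale: "\<And>h. 1 \<le> h \<Longrightarrow> 1 \<le> scale h"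
  shows "\<exists>h\<ge>1. 1 / 3 \<le> Limsup sequentially (\<lambda>M. ereal (h_alpha_freq l L L' w (scale h) h M))"
proof -
  define K where "K = nat \<lceil>6 * L / c\<rceil> + 2"
  define hs where "hs = rec_nat 1 (\<lambda>_ h. max h (scale h * K))"
  have hs_Suc: "hs (Suc i) = max (hs i) (scale (hs i) * K)" for i
    unfolding hs_def by simp
  have hs_pos: "1 \<le> hs i" for i
    by (induction i) (simp_all add: hs_def)
  have "mono hs"
    by (rule incseq_SucI) (simp add: hs_Suc)
  moreover have "1 \<le> scale (hs i)" "scale (hs i) * K \<le> hs (Suc i)" for i
    using scale[OF hs_pos[of i]] hs_Suc by auto
  moreover have "6 * L / c + 2 \<le> real K"
    unfolding K_def by linarith
  ultimately obtain i where "1 / 3 \<le> Limsup sequentially (\<lambda>M. ereal (h_alpha_freq l L L' w (scale (hs i)) (hs i) M))"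
    using frequent_h_alpha_le_at_some_scale[OF L c above, of hs "\<lambda>i. scale (hs i)" K L'] by blast
  then show ?thesis
    using hs_pos by blast
qed

theorem proposition2p1:
  fixes l :: "'a::euclidean_space" and w :: "real \<Rightarrow> 'a"
    and R L L' :: real
  assumes "R > 0"
    and "norm l = 1"
    and "L' > R"
    and "L = 3 * L'"
    and "continuous_on {0..} w"
    and "w 0 = 0"
    and "Limsup at_top (\<lambda>t. ereal (l \<bullet> w t / t)) > 0"
  shows "\<exists>h::nat. h \<ge> 1 \<and> (\<forall>\<alpha>::nat. \<alpha> \<ge> 2 \<longrightarrow>
     Limsup sequentially (\<lambda>M::nat. ereal ((1 / real (M + 1)) *
        (\<Sum>m = 0..M. if h_alpha l L L' m \<alpha> w \<le> ereal (real h) then 1 else 0)))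
       \<ge> 1 / 3)"
proof (rule ccontr)
  assume contra: "\<not> ?thesis"
  have L: "0 < L"
    using assms(1,3,4) by simp
  obtain c where c: "0 < c" and above: "\<exists>\<^sub>F t in at_top. c * t < l \<bullet> w t"
    using assms(7) by (rule frequently_above_linear_of_Limsup_pos)
  have "\<exists>\<alpha>. 2 \<le> \<alpha> \<and> \<not> 1 / 3 \<le> Limsup sequentially (\<lambda>M. ereal (h_alpha_freq l L L' w \<alpha> h M))"
    if "1 \<le> h" for h
  proof (rule ccontr)
    assume "\<nexists>\<alpha>. 2 \<le> \<alpha> \<and> \<not> 1 / 3 \<le> Limsup sequentially (\<lambda>M. ereal (h_alpha_freq l L L' w \<alpha> h M))"
    with contra that show False
      unfolding h_alpha_freq_def by blast
  qed
  then obtain scale where scale: "\<And>h. 1 \<le> h \<Longrightarrow>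
      2 \<le> scale h \<and> \<not> 1 / 3 \<le> Limsup sequentially (\<lambda>M. ereal (h_alpha_freq l L L' w (scale h) h M))"
    by metis
  obtain h where "1 \<le> h" "1 / 3 \<le> Limsup sequentially (\<lambda>M. ereal (h_alpha_freq l L L' w (scale h) h M))"
    using frequent_h_alpha_le_for_some_h[OF L c above, of scale L'] scale by fastforce
  then show False
    using scale by blast
qed

end
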